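(* Let $G$ be a network and fix an oriented edge $e$ of $G$. Let $\mathsf{FUSF}_G^e$ denote the joint distribution of a sample $\mathfrak F$ of $\mathsf{FUSF}_G$ and of the update $U(\mathfrak F,e)$. Then for every event $\mathscr A\subseteq\{0,1\}^{E(G)}$, \[ \mathsf{FUSF}_G(\mathfrak F \in \mathscr A) \geq \frac{c(e)}{c(e^-)}\,\mathsf{FUSF}_G^e(U(\mathfrak F,e) \in \mathscr A).\]
   Context: A network is a locally finite connected (infinite) multigraph $G=(V,E)$ with conductances $c:E\to(0,\infty)$; $c(u)$ is the sum of conductances of edges emanating from $u$. For a finite network $H$, $\mathsf{UST}_H$ gives each spanning tree probability proportional to the product of its conductances. For an exhaustion $V_n$, $G_n$ is the induced subnetwork and $\mathsf{FUSF}_G$ the weak limit of $\mathsf{UST}_{G_n}$. For a spanning tree $t$ and non-loop oriented edge $e$, $D(t,e)$ is the first edge on the path from $e^-$ to $e^+$ in $t$; if $T_n\sim\mathsf{UST}_{G_n}$ then $(T_n,D(T_n,e))$ converges in distribution to a pair $(\mathfrak F,D(e))$ with $\mathfrak F\sim\mathsf{FUSF}_G$. The update $U(f,e)$ is: $f$ if $e$ is a self-loop or $e\in f$; otherwise $f\cup\{e\}\setminus D(e)$ with $D(e)$ sampled from its conditional law given $\mathfrak F=f$, independently of everything else. *)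

theory Defs
  imports "HOL-Probability.Probability"
begin

text \<open>A multigraph is given by a vertex set V, an edge set E and, for every edge,
  a reference orientation: src x and tgt x are its two endpoints (a self-loop has
  src x = tgt x).  Parallel edges are distinct elements of E with the same endpoints.\<close>

definition joins :: "('e \<Rightarrow> 'v) \<Rightarrow> ('e \<Rightarrow> 'v) \<Rightarrow> 'e \<Rightarrow> 'v \<Rightarrow> 'v \<Rightarrow> bool" where
  "joins src tgt x u w \<longleftrightarrow> (src x = u \<and> tgt x = w) \<or> (src x = w \<and> tgt x = u)"

definition is_path :: "('e \<Rightarrow> 'v) \<Rightarrow> ('e \<Rightarrow> 'v) \<Rightarrow> 'e set \<Rightarrow> 'v list \<Rightarrow> 'e list \<Rightarrow> bool" where
  "is_path src tgt F vs ys \<longleftrightarrow>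
     length vs = Suc (length ys) \<and> distinct vs \<and> set ys \<subseteq> F \<and>
     (\<forall>i < length ys. joins src tgt (ys ! i) (vs ! i) (vs ! Suc i))"

definition connected_by :: "('e \<Rightarrow> 'v) \<Rightarrow> ('e \<Rightarrow> 'v) \<Rightarrow> 'e set \<Rightarrow> 'v \<Rightarrow> 'v \<Rightarrow> bool" where
  "connected_by src tgt F u w \<longleftrightarrow>
     (\<exists>vs ys. is_path src tgt F vs ys \<and> List.hd vs = u \<and> last vs = w)"

definition forest :: "('e \<Rightarrow> 'v) \<Rightarrow> ('e \<Rightarrow> 'v) \<Rightarrow> 'e set \<Rightarrow> bool" where
  "forest src tgt F \<longleftrightarrow>
     (\<forall>x\<in>F. src x \<noteq> tgt x \<and> \<not> connected_by src tgt (F - {x}) (src x) (tgt x))"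

definition induced_edges :: "'e set \<Rightarrow> ('e \<Rightarrow> 'v) \<Rightarrow> ('e \<Rightarrow> 'v) \<Rightarrow> 'v set \<Rightarrow> 'e set" where
  "induced_edges E src tgt W = {x\<in>E. src x \<in> W \<and> tgt x \<in> W}"

definition spanning_tree ::
  "'e set \<Rightarrow> ('e \<Rightarrow> 'v) \<Rightarrow> ('e \<Rightarrow> 'v) \<Rightarrow> 'v set \<Rightarrow> 'e set \<Rightarrow> bool" where
  "spanning_tree E src tgt W T \<longleftrightarrow>
     T \<subseteq> induced_edges E src tgt W \<and> forest src tgt T \<and>
     (\<forall>u\<in>W. \<forall>w\<in>W. connected_by src tgt T u w)"

definition network ::
  "'v set \<Rightarrow> 'e set \<Rightarrow> ('e \<Rightarrow> 'v) \<Rightarrow> ('e \<Rightarrow> 'v) \<Rightarrow> ('e \<Rightarrow> real) \<Rightarrow> bool" where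
  "network V E src tgt c \<longleftrightarrow>
     (\<forall>x\<in>E. src x \<in> V \<and> tgt x \<in> V) \<and>
     (\<forall>x\<in>E. c x > 0) \<and>
     (\<forall>v\<in>V. finite {x\<in>E. src x = v \<or> tgt x = v}) \<and>
     (\<forall>u\<in>V. \<forall>w\<in>V. connected_by src tgt E u w) \<and>
     infinite V"

text \<open>c(u): sum of conductances of the edges at u (a self-loop counted once).\<close>
definition vcond :: "'e set \<Rightarrow> ('e \<Rightarrow> 'v) \<Rightarrow> ('e \<Rightarrow> 'v) \<Rightarrow> ('e \<Rightarrow> real) \<Rightarrow> 'v \<Rightarrow> real" where
  "vcond E src tgt c u = (\<Sum>x\<in>{x\<in>E. src x = u \<or> tgt x = u}. c x)"

definition ust_prob ::
  "'e set \<Rightarrow> ('e \<Rightarrow> 'v) \<Rightarrow> ('e \<Rightarrow> 'v) \<Rightarrow> ('e \<Rightarrow> real) \<Rightarrow> 'v set \<Rightarrow> ('e set \<Rightarrow> bool) \<Rightarrow> real" where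
  "ust_prob E src tgt c W P =
     (\<Sum>T\<in>{T. spanning_tree E src tgt W T \<and> P T}. \<Prod>x\<in>T. c x) /
     (\<Sum>T\<in>{T. spanning_tree E src tgt W T}. \<Prod>x\<in>T. c x)"

definition first_edge :: "('e \<Rightarrow> 'v) \<Rightarrow> ('e \<Rightarrow> 'v) \<Rightarrow> 'e set \<Rightarrow> 'v \<Rightarrow> 'v \<Rightarrow> 'e" where
  "first_edge src tgt t a b =
     (THE y. \<exists>vs ys. is_path src tgt t vs ys \<and> List.hd vs = a \<and> last vs = b \<and>
                    ys \<noteq> [] \<and> List.hd ys = y)"

text \<open>Subsets of E with the product sigma-algebra (generated by the coordinate events).\<close>
definition conf_space :: "'e set \<Rightarrow> 'e set measure" where
  "conf_space E = sigma (Pow E) ((\<lambda>x. {f\<in>Pow E. x \<in> f}) ` E)"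

definition cyl :: "'e set \<Rightarrow> 'e set \<Rightarrow> 'e set \<Rightarrow> 'e set set" where
  "cyl E K B = {f\<in>Pow E. f \<inter> K = B}"

text \<open>Weak convergence on {0,1}^E (compact, product topology) is convergence of the
  probabilities of all cylinder events.\<close>
definition is_FUSF ::
  "'v set \<Rightarrow> 'e set \<Rightarrow> ('e \<Rightarrow> 'v) \<Rightarrow> ('e \<Rightarrow> 'v) \<Rightarrow> ('e \<Rightarrow> real) \<Rightarrow> (nat \<Rightarrow> 'v set)
     \<Rightarrow> 'e set measure \<Rightarrow> bool" where
  "is_FUSF V E src tgt c Vn \<mu> \<longleftrightarrow>
     prob_space \<mu> \<and> sets \<mu> = sets (conf_space E) \<and>
     (\<forall>K B. finite K \<longrightarrow> K \<subseteq> E \<longrightarrow> B \<subseteq> K \<longrightarrow>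
        (\<lambda>n. ust_prob E src tgt c (Vn n) (\<lambda>t. t \<inter> K = B)) \<longlonglongrightarrow> measure \<mu> (cyl E K B))"

text \<open>Joint limit law of (T_n, D(T_n,e)) on {0,1}^E x E (E discrete), for e = edge x
  oriented from a to b.\<close>
definition is_joint_FUSF_D ::
  "'v set \<Rightarrow> 'e set \<Rightarrow> ('e \<Rightarrow> 'v) \<Rightarrow> ('e \<Rightarrow> 'v) \<Rightarrow> ('e \<Rightarrow> real) \<Rightarrow> (nat \<Rightarrow> 'v set)
     \<Rightarrow> 'v \<Rightarrow> 'v \<Rightarrow> ('e set \<times> 'e) measure \<Rightarrow> bool" where
  "is_joint_FUSF_D V E src tgt c Vn a b \<nu> \<longleftrightarrow>
     prob_space \<nu> \<and> sets \<nu> = sets (conf_space E \<Otimes>\<^sub>M count_space E) \<and>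
     (\<forall>K B y. finite K \<longrightarrow> K \<subseteq> E \<longrightarrow> B \<subseteq> K \<longrightarrow> y \<in> E \<longrightarrow>
        (\<lambda>n. ust_prob E src tgt c (Vn n) (\<lambda>t. t \<inter> K = B \<and> first_edge src tgt t a b = y))
          \<longlonglongrightarrow> measure \<nu> (cyl E K B \<times> {y}))"

definition exhaustion ::
  "'v set \<Rightarrow> 'e set \<Rightarrow> ('e \<Rightarrow> 'v) \<Rightarrow> ('e \<Rightarrow> 'v) \<Rightarrow> (nat \<Rightarrow> 'v set) \<Rightarrow> bool" where
  "exhaustion V E src tgt Vn \<longleftrightarrow>
     (\<forall>n. finite (Vn n) \<and> Vn n \<subseteq> V \<and> Vn n \<subseteq> Vn (Suc n)) \<and> (\<Union>n. Vn n) = V \<and>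
     (\<forall>n. \<forall>u\<in>Vn n. \<forall>w\<in>Vn n. connected_by src tgt (induced_edges E src tgt (Vn n)) u w)"

text \<open>Update U(f,e) given the sampled value y of D(e); x is the underlying edge of e.\<close>
definition upd :: "('e \<Rightarrow> 'v) \<Rightarrow> ('e \<Rightarrow> 'v) \<Rightarrow> 'e \<Rightarrow> 'e set \<Rightarrow> 'e \<Rightarrow> 'e set" where
  "upd src tgt x f y = (if src x = tgt x \<or> x \<in> f then f else insert x f - {y})"

end

theory Submission
  imports Defs
begin

text \<open>
  Let e run from a to b.  On a finite network, send a spanning tree T not containing e to the
  pair (T + e - D(T,e), D(T,e)).  This map is injective, its first component is a spanning tree
  containing e, its second one an edge at a other than e, and it multiplies the weight by
  c(D(T,e))/c(e).  Hence the UST weight of the trees T with U(T,e) in a given event is at most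
  c(a)/c(e) times the weight of the event itself.  For cylinder events this inequality passes
  to the limit along the exhaustion, because in the limit D(e) is almost surely an edge at a;
  a monotone class argument extends it to all measurable events.
\<close>

section \<open>Monotone classes\<close>

inductive_set smallest_monotone_class :: "'a set set \<Rightarrow> 'a set set" for M where
  basic: "A \<in> M \<Longrightarrow> A \<in> smallest_monotone_class M"
| Union: "(\<And>i::nat. A i \<in> smallest_monotone_class M) \<Longrightarrow> incseq A \<Longrightarrow>
    (\<Union>i. A i) \<in> smallest_monotone_class M"
| Inter: "(\<And>i::nat. A i \<in> smallest_monotone_class M) \<Longrightarrow> decseq A \<Longrightarrow>
    (\<Inter>i. A i) \<in> smallest_monotone_class M"

lemma smallest_monotone_class_subset_sigma_sets:
  assumes "M \<subseteq> Pow \<Omega>"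
  shows "smallest_monotone_class M \<subseteq> sigma_sets \<Omega> M"
proof
  fix A assume "A \<in> smallest_monotone_class M"
  then show "A \<in> sigma_sets \<Omega> M"
    by induction (auto intro: sigma_sets.Basic sigma_sets.Union sigma_sets_Inter[OF assms])
qed

context algebra
begin

lemma smallest_monotone_class_Compl:
  assumes "A \<in> smallest_monotone_class M"
  shows "\<Omega> - A \<in> smallest_monotone_class M"
  using assms
proof induction
  case (Union A)
  have "(\<Inter>i. \<Omega> - A i) \<in> smallest_monotone_class M"
    using Union.IH \<open>incseq A\<close>
    by (intro smallest_monotone_class.Inter) (auto simp: incseq_def decseq_def)
  moreover have "\<Omega> - (\<Union>i. A i) = (\<Inter>i. \<Omega> - A i)" by auto
  ultimately show ?case by (simp only:)
next
  case (Inter A)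
  have "(\<Union>i. \<Omega> - A i) \<in> smallest_monotone_class M"
    using Inter.IH \<open>decseq A\<close>
    by (intro smallest_monotone_class.Union) (auto simp: incseq_def decseq_def)
  moreover have "\<Omega> - (\<Inter>i. A i) = (\<Union>i. \<Omega> - A i)" by auto
  ultimately show ?case by (simp only:)
qed (auto intro: smallest_monotone_class.basic)

lemma smallest_monotone_class_Int_basic:
  assumes "A \<in> smallest_monotone_class M" and "B \<in> M"
  shows "A \<inter> B \<in> smallest_monotone_class M"
  using assms(1)
proof induction
  case (Union A)
  have "(\<Union>i. A i \<inter> B) \<in> smallest_monotone_class M"
    using Union.IH \<open>incseq A\<close> by (intro smallest_monotone_class.Union) (auto simp: incseq_def)
  moreover have "(\<Union>i. A i) \<inter> B = (\<Union>i. A i \<inter> B)" by auto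
  ultimately show ?case by (simp only:)
next
  case (Inter A)
  have "(\<Inter>i. A i \<inter> B) \<in> smallest_monotone_class M"
    using Inter.IH \<open>decseq A\<close> by (intro smallest_monotone_class.Inter) (auto simp: decseq_def)
  moreover have "(\<Inter>i. A i) \<inter> B = (\<Inter>i. A i \<inter> B)" by auto
  ultimately show ?case by (simp only:)
qed (use assms(2) in \<open>auto intro: smallest_monotone_class.basic\<close>)

lemma smallest_monotone_class_Int:
  assumes "A \<in> smallest_monotone_class M" and "B \<in> smallest_monotone_class M"
  shows "A \<inter> B \<in> smallest_monotone_class M"
  using assms(2)
proof induction
  case (basic B)
  then show ?case using smallest_monotone_class_Int_basic[OF assms(1)] by blast
next
  case (Union B)
  have "(\<Union>i. A \<inter> B i) \<in> smallest_monotone_class M"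
    using Union.IH \<open>incseq B\<close> by (intro smallest_monotone_class.Union) (auto simp: incseq_def)
  moreover have "A \<inter> (\<Union>i. B i) = (\<Union>i. A \<inter> B i)" by auto
  ultimately show ?case by (simp only:)
next
  case (Inter B)
  have "(\<Inter>i. A \<inter> B i) \<in> smallest_monotone_class M"
    using Inter.IH \<open>decseq B\<close> by (intro smallest_monotone_class.Inter) (auto simp: decseq_def)
  moreover have "A \<inter> (\<Inter>i. B i) = (\<Inter>i. A \<inter> B i)" by auto
  ultimately show ?case by (simp only:)
qed

lemma sigma_algebra_smallest_monotone_class: "sigma_algebra \<Omega> (smallest_monotone_class M)"
proof -
  have "algebra \<Omega> (smallest_monotone_class M)"
    unfolding algebra_iff_Int
  proof (intro conjI ballI)
    show "smallest_monotone_class M \<subseteq> Pow \<Omega>"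
      using smallest_monotone_class_subset_sigma_sets[OF space_closed]
        sigma_sets_into_sp[OF space_closed] by blast
    show "{} \<in> smallest_monotone_class M"
      by (rule smallest_monotone_class.basic) (rule empty_sets)
  qed (fact smallest_monotone_class_Compl smallest_monotone_class_Int)+
  then interpret MC: algebra \<Omega> "smallest_monotone_class M" .
  show ?thesis
    unfolding sigma_algebra_iff
  proof (intro conjI allI impI)
    fix A :: "nat \<Rightarrow> 'a set" assume "range A \<subseteq> smallest_monotone_class M"
    then have "(\<Union>i\<le>n. A i) \<in> smallest_monotone_class M" for n by auto
    moreover have "incseq (\<lambda>n. \<Union>i\<le>n. A i)"
      by (rule monoI) (rule UN_mono, auto)
    ultimately have "(\<Union>n. \<Union>i\<le>n. A i) \<in> smallest_monotone_class M"
      by (rule smallest_monotone_class.Union)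
    moreover have "(\<Union>n. \<Union>i\<le>n. A i) = (\<Union>i. A i)" by auto
    ultimately show "(\<Union>i. A i) \<in> smallest_monotone_class M" by simp
  qed (fact MC.algebra_axioms)
qed

lemma sigma_sets_monotone_induct:
  assumes "A \<in> sigma_sets \<Omega> M"
    and base: "\<And>A. A \<in> M \<Longrightarrow> P A"
    and inc: "\<And>A. (\<And>i::nat. A i \<in> sigma_sets \<Omega> M) \<Longrightarrow> (\<And>i. P (A i)) \<Longrightarrow> incseq A \<Longrightarrow>
      P (\<Union>i. A i)"
    and dec: "\<And>A. (\<And>i::nat. A i \<in> sigma_sets \<Omega> M) \<Longrightarrow> (\<And>i. P (A i)) \<Longrightarrow> decseq A \<Longrightarrow>
      P (\<Inter>i. A i)"
  shows "P A"
proof -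
  have "sigma_sets \<Omega> M \<subseteq> smallest_monotone_class M"
    by (rule sigma_algebra.sigma_sets_subset[OF sigma_algebra_smallest_monotone_class])
      (auto intro: smallest_monotone_class.basic)
  with assms(1) have "A \<in> smallest_monotone_class M" by blast
  then show ?thesis
  proof induction
    case (basic A)
    then show ?case by (rule base)
  next
    case (Union A)
    then show ?case
      using smallest_monotone_class_subset_sigma_sets[OF space_closed] by (intro inc) auto
  next
    case (Inter A)
    then show ?case
      using smallest_monotone_class_subset_sigma_sets[OF space_closed] by (intro dec) auto
  qed
qed

end

lemma finite_measure_le_sigma_sets_generator:
  assumes "algebra \<Omega> G" and "finite_measure M" and "finite_measure N"
    and sets_M: "sets M = sigma_sets \<Omega> G" and sets_N: "sets N = sigma_sets \<Omega> G"
    and le: "\<And>A. A \<in> G \<Longrightarrow> k * measure N A \<le> measure M A"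
    and "A \<in> sigma_sets \<Omega> G"
  shows "k * measure N A \<le> measure M A"
proof (induction rule: algebra.sigma_sets_monotone_induct[OF assms(1) assms(7)])
  case (1 A)
  from 1 show ?case by (rule le)
next
  case (2 A)
  then have "range A \<subseteq> sets M" "range A \<subseteq> sets N" using sets_M sets_N by auto
  then have "(\<lambda>i. k * measure N (A i)) \<longlonglongrightarrow> k * measure N (\<Union>i. A i)"
    and "(\<lambda>i. measure M (A i)) \<longlonglongrightarrow> measure M (\<Union>i. A i)"
    using finite_measure.finite_Lim_measure_incseq[OF assms(3)] finite_measure.finite_Lim_measure_incseq[OF assms(2)]
      \<open>incseq A\<close> by (auto intro: tendsto_mult_left)
  then show ?case using 2 by (intro LIMSEQ_le) auto
next
  case (3 A)
  then have "range A \<subseteq> sets M" "range A \<subseteq> sets N" using sets_M sets_N by auto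
  then have "(\<lambda>i. k * measure N (A i)) \<longlonglongrightarrow> k * measure N (\<Inter>i. A i)"
    and "(\<lambda>i. measure M (A i)) \<longlonglongrightarrow> measure M (\<Inter>i. A i)"
    using finite_measure.finite_Lim_measure_decseq[OF assms(3)] finite_measure.finite_Lim_measure_decseq[OF assms(2)]
      \<open>decseq A\<close> by (auto intro: tendsto_mult_left)
  then show ?case using 3 by (intro LIMSEQ_le) auto
qed

section \<open>Paths, forests and the exchange of edges\<close>

definition adjacent :: "('e \<Rightarrow> 'v) \<Rightarrow> ('e \<Rightarrow> 'v) \<Rightarrow> 'e set \<Rightarrow> 'v \<Rightarrow> 'v \<Rightarrow> bool" where
  "adjacent src tgt F u w \<longleftrightarrow> (\<exists>y\<in>F. joins src tgt y u w)"

abbreviation reachable :: "('e \<Rightarrow> 'v) \<Rightarrow> ('e \<Rightarrow> 'v) \<Rightarrow> 'e set \<Rightarrow> 'v \<Rightarrow> 'v \<Rightarrow> bool" where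
  "reachable src tgt F \<equiv> (adjacent src tgt F)\<^sup>*\<^sup>*"

lemma joins_commute: "joins src tgt y u w \<longleftrightarrow> joins src tgt y w u"
  unfolding joins_def by auto

lemma joins_endpoints: "joins src tgt y u w \<Longrightarrow> {src y, tgt y} = {u, w}"
  unfolding joins_def by auto

lemma reachable_sym:
  assumes "reachable src tgt F u w"
  shows "reachable src tgt F w u"
proof -
  have "symp (adjacent src tgt F)"
    unfolding adjacent_def by (rule sympI) (metis joins_commute)
  with assms show ?thesis by (simp add: symp_rtranclp[THEN sympD])
qed

lemma reachable_mono:
  assumes "reachable src tgt F u w" and "F \<subseteq> H"
  shows "reachable src tgt H u w"
  using assms(1)
  by induction (use assms(2) in \<open>auto simp: adjacent_def intro: rtranclp.rtrancl_into_rtrancl\<close>)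

lemma reachable_joins: "y \<in> F \<Longrightarrow> joins src tgt y u w \<Longrightarrow> reachable src tgt F u w"
  unfolding adjacent_def by (auto intro!: r_into_rtranclp)

lemma reachable_insert:
  assumes "reachable src tgt (insert e H) u w"
  shows "reachable src tgt H u w
    \<or> (reachable src tgt H u (src e) \<and> reachable src tgt H (tgt e) w)
    \<or> (reachable src tgt H u (tgt e) \<and> reachable src tgt H (src e) w)"
  using assms
proof (induction rule: rtranclp_induct)
  case (step v w)
  from step(2) obtain y where y: "y \<in> insert e H" "joins src tgt y v w"
    unfolding adjacent_def by blast
  show ?case
  proof (cases "y \<in> H")
    case True
    then have "adjacent src tgt H v w" using y unfolding adjacent_def by blast
    then show ?thesis using step(3) by (meson rtranclp.rtrancl_into_rtrancl)
  next
    case False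
    then have "(v = src e \<and> w = tgt e) \<or> (v = tgt e \<and> w = src e)"
      using y unfolding joins_def by auto
    then show ?thesis using step(3) by (auto intro: rtranclp_trans)
  qed
qed simp

lemma reachable_insert_redundant:
  assumes "reachable src tgt H (src e) (tgt e)" and "reachable src tgt (insert e H) u w"
  shows "reachable src tgt H u w"
  using reachable_insert[OF assms(2)] assms(1) reachable_sym rtranclp_trans by metis

lemma is_path_reachable:
  assumes "is_path src tgt F vs ys" and "i \<le> j" and "j < length vs"
    and "\<And>k. i \<le> k \<Longrightarrow> k < j \<Longrightarrow> ys ! k \<in> H"
  shows "reachable src tgt H (vs ! i) (vs ! j)"
  using assms(2-4)
proof (induction j)
  case (Suc j)
  show ?case
  proof (cases "i = Suc j")
    case False
    then have "reachable src tgt H (vs ! i) (vs ! j)" using Suc by simp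
    moreover have "joins src tgt (ys ! j) (vs ! j) (vs ! Suc j)" and "ys ! j \<in> H"
      using Suc False assms(1) unfolding is_path_def by auto
    ultimately show ?thesis by (meson reachable_joins rtranclp_trans)
  qed simp
qed simp

lemma is_path_nth_edge: "is_path src tgt F vs ys \<Longrightarrow> k < length ys \<Longrightarrow> ys ! k \<in> F"
  unfolding is_path_def by (auto simp: subset_iff)

lemma is_path_hd: "is_path src tgt F vs ys \<Longrightarrow> hd vs = vs ! 0"
  unfolding is_path_def by (cases vs) auto

lemma is_path_last: "is_path src tgt F vs ys \<Longrightarrow> last vs = vs ! length ys"
  unfolding is_path_def by (subst last_conv_nth) auto

lemma is_path_take:
  assumes "is_path src tgt F vs ys" and "i < length vs"
  shows "is_path src tgt F (take (Suc i) vs) (take i ys)"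
  using assms unfolding is_path_def by (auto simp: min_def dest: in_set_takeD)

lemma is_path_snoc:
  assumes "is_path src tgt F vs ys" and "w \<notin> set vs" and "y \<in> F"
    and "joins src tgt y (last vs) w"
  shows "is_path src tgt F (vs @ [w]) (ys @ [y])"
  using assms is_path_last[OF assms(1)] unfolding is_path_def
  by (auto simp: nth_append less_Suc_eq)

lemma connected_by_iff_reachable:
  "connected_by src tgt F u w \<longleftrightarrow> reachable src tgt F u w"
proof
  assume "connected_by src tgt F u w"
  then obtain vs ys where p: "is_path src tgt F vs ys" "hd vs = u" "last vs = w"
    unfolding connected_by_def by blast
  have "reachable src tgt F (vs ! 0) (vs ! length ys)"
    by (rule is_path_reachable[OF p(1)]) (use p(1) in \<open>auto simp: is_path_def\<close>)
  then show "reachable src tgt F u w"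
    using p is_path_hd is_path_last by metis
next
  assume "reachable src tgt F u w"
  then show "connected_by src tgt F u w"
  proof (induction rule: rtranclp_induct)
    case base
    have "is_path src tgt F [u] []" unfolding is_path_def by simp
    then show ?case unfolding connected_by_def by force
  next
    case (step v w)
    obtain vs ys where p: "is_path src tgt F vs ys" "hd vs = u" "last vs = v"
      using step.IH unfolding connected_by_def by blast
    obtain y where y: "y \<in> F" "joins src tgt y v w"
      using step.hyps(2) unfolding adjacent_def by blast
    have "vs \<noteq> []" using p(1) unfolding is_path_def by auto
    show ?case
    proof (cases "w \<in> set vs")
      case True
      then obtain i where i: "i < length vs" "vs ! i = w" by (auto simp: in_set_conv_nth)
      have "hd (take (Suc i) vs) = u" using p(2) \<open>vs \<noteq> []\<close> by (cases vs) auto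
      moreover have "last (take (Suc i) vs) = w" using i by (simp add: take_Suc_conv_app_nth)
      ultimately show ?thesis using is_path_take[OF p(1) i(1)] unfolding connected_by_def by blast
    next
      case False
      have "hd (vs @ [w]) = u" using p(2) \<open>vs \<noteq> []\<close> by simp
      with is_path_snoc[OF p(1) False y(1)] y(2) p(3) show ?thesis
        unfolding connected_by_def by force
    qed
  qed
qed

lemma is_path_distinct_edges:
  assumes "is_path src tgt F vs ys"
  shows "distinct ys"
  unfolding distinct_conv_nth
proof (intro allI impI)
  fix i k assume ik: "i < length ys" "k < length ys" "i \<noteq> k"
  have l: "length vs = Suc (length ys)" and d: "distinct vs"
    and j: "\<forall>i<length ys. joins src tgt (ys ! i) (vs ! i) (vs ! Suc i)"
    using assms unfolding is_path_def by auto
  show "ys ! i \<noteq> ys ! k"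
  proof
    assume "ys ! i = ys ! k"
    then have "{vs ! i, vs ! Suc i} = {vs ! k, vs ! Suc k}"
      using joins_endpoints j ik by metis
    then have "i = k \<or> (i = Suc k \<and> Suc i = k)"
      using d l ik unfolding doubleton_eq_iff by (auto simp: nth_eq_iff_index_eq)
    then show False using ik by auto
  qed
qed

lemma is_path_edge_at_start:
  assumes "is_path src tgt F vs ys" and "i < length ys" and "joins src tgt (ys ! i) (vs ! 0) w"
  shows "i = 0"
proof -
  have "{vs ! i, vs ! Suc i} = {vs ! 0, w}"
    using assms joins_endpoints unfolding is_path_def by metis
  then have "vs ! 0 = vs ! i \<or> vs ! 0 = vs ! Suc i" by auto
  then show ?thesis
    using assms(1,2) unfolding is_path_def by (auto simp: nth_eq_iff_index_eq)
qed

lemma forest_iff_reachable: "forest src tgt F \<longleftrightarrow>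
   (\<forall>y\<in>F. src y \<noteq> tgt y \<and> \<not> reachable src tgt (F - {y}) (src y) (tgt y))"
  unfolding forest_def connected_by_iff_reachable by simp

lemma forest_edge:
  assumes "forest src tgt F" and "y \<in> F"
  shows "src y \<noteq> tgt y" and "\<not> reachable src tgt (F - {y}) (src y) (tgt y)"
  using bspec[OF assms(1)[unfolded forest_iff_reachable] assms(2)] by simp_all

lemma forest_not_reachable_joins:
  assumes "forest src tgt F" and "y \<in> F" and "joins src tgt y u w"
  shows "\<not> reachable src tgt (F - {y}) u w"
proof -
  have "\<not> reachable src tgt (F - {y}) (src y) (tgt y)"
    using forest_edge(2)[OF assms(1,2)] .
  then show ?thesis
    using assms(3) reachable_sym[of src tgt "F - {y}" u w] unfolding joins_def by auto
qed

lemma forest_subset: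
  assumes "forest src tgt F" and "H \<subseteq> F"
  shows "forest src tgt H"
  unfolding forest_iff_reachable
proof (intro ballI conjI)
  fix y assume "y \<in> H"
  then have y: "y \<in> F" and sub: "H - {y} \<subseteq> F - {y}" using assms(2) by auto
  show "src y \<noteq> tgt y" using forest_edge(1)[OF assms(1) y] .
  show "\<not> reachable src tgt (H - {y}) (src y) (tgt y)"
    using forest_edge(2)[OF assms(1) y] reachable_mono[OF _ sub] by metis
qed

lemma reachable_insert_bridge:
  assumes "z \<in> F" and bridge: "\<not> reachable src tgt (F - {z}) (src z) (tgt z)"
    and apart: "\<not> reachable src tgt F (src e) (tgt e)"
  shows "\<not> reachable src tgt (insert e (F - {z})) (src z) (tgt z)"
proof
  have z: "reachable src tgt F (src z) (tgt z)"
    using reachable_joins[OF \<open>z \<in> F\<close>, of src tgt "src z" "tgt z"] by (simp add: joins_def)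
  assume "reachable src tgt (insert e (F - {z})) (src z) (tgt z)"
  then consider
      "reachable src tgt (F - {z}) (src z) (tgt z)"
    | "reachable src tgt (F - {z}) (src z) (src e)" "reachable src tgt (F - {z}) (tgt e) (tgt z)"
    | "reachable src tgt (F - {z}) (src z) (tgt e)" "reachable src tgt (F - {z}) (src e) (tgt z)"
    using reachable_insert[of src tgt e "F - {z}" "src z" "tgt z"] by metis
  then show False
  proof cases
    case 1
    then show False using bridge by blast
  next
    case 2
    then have "reachable src tgt F (src e) (src z)" "reachable src tgt F (tgt z) (tgt e)"
      using reachable_mono reachable_sym by (metis Diff_subset)+
    then show False using z apart by (meson rtranclp_trans)
  next
    case 3
    then have "reachable src tgt F (src e) (tgt z)" "reachable src tgt F (tgt z) (tgt e)"
      using reachable_mono reachable_sym z by (metis Diff_subset rtranclp_trans)+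
    then show False using apart by (meson rtranclp_trans)
  qed
qed

lemma forest_insert:
  assumes F: "forest src tgt F" and "src e \<noteq> tgt e"
    and apart: "\<not> reachable src tgt F (src e) (tgt e)"
  shows "forest src tgt (insert e F)"
  unfolding forest_iff_reachable
proof (intro ballI conjI)
  fix z assume z: "z \<in> insert e F"
  show "src z \<noteq> tgt z" using z \<open>src e \<noteq> tgt e\<close> forest_edge(1)[OF F] by auto
  show "\<not> reachable src tgt (insert e F - {z}) (src z) (tgt z)"
  proof (cases "z = e")
    case True
    have "e \<notin> F" using apart reachable_joins[of e F src tgt] by (auto simp: joins_def)
    then show ?thesis using True apart by simp
  next
    case False
    then have "z \<in> F" and "insert e F - {z} = insert e (F - {z})" using z by auto
    then show ?thesis using reachable_insert_bridge forest_edge(2)[OF F] apart by metis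
  qed
qed

lemma is_path_nonempty:
  assumes "is_path src tgt F vs ys" and "hd vs \<noteq> last vs"
  shows "ys \<noteq> []"
  using assms unfolding is_path_def by (cases vs) auto

lemma forest_path_first_edge_unique:
  assumes F: "forest src tgt F" and ab: "a \<noteq> b"
    and p1: "is_path src tgt F vs1 ys1" "hd vs1 = a" "last vs1 = b"
    and p2: "is_path src tgt F vs2 ys2" "hd vs2 = a" "last vs2 = b"
  shows "hd ys1 = hd ys2"
proof (rule ccontr)
  assume ne: "hd ys1 \<noteq> hd ys2"
  have n1: "ys1 \<noteq> []" and n2: "ys2 \<noteq> []"
    using is_path_nonempty[OF p1(1)] is_path_nonempty[OF p2(1)] p1 p2 ab by auto
  define y where "y = ys1 ! 0"
  have a: "vs1 ! 0 = a" "vs2 ! 0 = a" using is_path_hd p1 p2 by metis+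
  have jy: "joins src tgt y a (vs1 ! 1)" and yF: "y \<in> F"
    using p1(1) n1 a unfolding is_path_def y_def by auto
  \<comment> \<open>The second path avoids y, and so does the first one after its first step.\<close>
  have "reachable src tgt (F - {y}) (vs2 ! 0) (vs2 ! length ys2)"
  proof (rule is_path_reachable[OF p2(1)])
    fix k assume k: "0 \<le> k" "k < length ys2"
    have "ys2 ! k \<noteq> y"
    proof
      assume eq: "ys2 ! k = y"
      then have "k = 0" using is_path_edge_at_start[OF p2(1) k(2)] jy a by simp
      then show False using eq ne n1 n2 by (simp add: hd_conv_nth y_def)
    qed
    then show "ys2 ! k \<in> F - {y}" using is_path_nth_edge[OF p2(1) k(2)] by simp
  qed (use p2(1) in \<open>auto simp: is_path_def\<close>)
  then have "reachable src tgt (F - {y}) a b" using a p2 is_path_last by metis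
  moreover have "reachable src tgt (F - {y}) (vs1 ! 1) (vs1 ! length ys1)"
  proof (rule is_path_reachable[OF p1(1)])
    fix k assume k: "1 \<le> k" "k < length ys1"
    then have "ys1 ! k \<noteq> y"
      using is_path_distinct_edges[OF p1(1)] n1 by (simp add: y_def nth_eq_iff_index_eq)
    then show "ys1 ! k \<in> F - {y}" using is_path_nth_edge[OF p1(1) k(2)] by simp
  qed (use p1(1) n1 in \<open>auto simp: is_path_def Suc_le_eq\<close>)
  then have "reachable src tgt (F - {y}) (vs1 ! 1) b" using p1 is_path_last by metis
  ultimately have "reachable src tgt (F - {y}) a (vs1 ! 1)"
    by (meson reachable_sym rtranclp_trans)
  then show False using forest_not_reachable_joins[OF F yF jy] by simp
qed

lemma first_edge_eq_hd:
  assumes "forest src tgt F" and "a \<noteq> b"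
    and "is_path src tgt F vs ys" "hd vs = a" "last vs = b"
  shows "first_edge src tgt F a b = hd ys"
  unfolding first_edge_def
proof (rule the_equality)
  show "\<exists>vs' ys'. is_path src tgt F vs' ys' \<and> hd vs' = a \<and> last vs' = b \<and> ys' \<noteq> [] \<and> hd ys' = hd ys"
    using assms is_path_nonempty by blast
qed (use forest_path_first_edge_unique[OF assms(1,2) _ _ _ assms(3-5)] in blast)

lemma spanning_tree_iff_reachable:
  "spanning_tree E src tgt W t \<longleftrightarrow> t \<subseteq> induced_edges E src tgt W \<and> forest src tgt t \<and>
     (\<forall>u\<in>W. \<forall>w\<in>W. reachable src tgt t u w)"
  unfolding spanning_tree_def connected_by_iff_reachable by simp

lemma spanning_tree_path:
  assumes "spanning_tree E src tgt W t" and "a \<in> W" "b \<in> W" "a \<noteq> b"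
  obtains vs ys where "is_path src tgt t vs ys" "vs ! 0 = a" "vs ! length ys = b" "ys \<noteq> []"
    "first_edge src tgt t a b = ys ! 0"
proof -
  obtain vs ys where p: "is_path src tgt t vs ys" "hd vs = a" "last vs = b"
    using assms unfolding spanning_tree_def connected_by_def by blast
  have "ys \<noteq> []" using is_path_nonempty[OF p(1)] p assms(4) by simp
  moreover have "first_edge src tgt t a b = hd ys"
    using assms p unfolding spanning_tree_def by (intro first_edge_eq_hd) auto
  ultimately show ?thesis
    using that p is_path_hd[OF p(1)] is_path_last[OF p(1)] by (simp add: hd_conv_nth)
qed

lemma first_edge_in_tree:
  assumes "spanning_tree E src tgt W t" and "a \<in> W" "b \<in> W" "a \<noteq> b"
  shows "first_edge src tgt t a b \<in> t"
    and "src (first_edge src tgt t a b) = a \<or> tgt (first_edge src tgt t a b) = a"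
proof -
  obtain vs ys where p: "is_path src tgt t vs ys" "vs ! 0 = a" "ys \<noteq> []"
    "first_edge src tgt t a b = ys ! 0"
    using spanning_tree_path[OF assms] by metis
  then show "first_edge src tgt t a b \<in> t"
    and "src (first_edge src tgt t a b) = a \<or> tgt (first_edge src tgt t a b) = a"
    unfolding is_path_def joins_def by auto
qed

lemma spanning_tree_first_edge_bridge:
  assumes t: "spanning_tree E src tgt W t" and "a \<in> W" "b \<in> W" "a \<noteq> b"
  obtains v where "joins src tgt (first_edge src tgt t a b) a v"
    and "reachable src tgt (t - {first_edge src tgt t a b}) v b"
    and "\<not> reachable src tgt (t - {first_edge src tgt t a b}) a b"
proof -
  obtain vs ys where p: "is_path src tgt t vs ys" "vs ! 0 = a" "vs ! length ys = b" "ys \<noteq> []"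
    and fe: "first_edge src tgt t a b = ys ! 0"
    using spanning_tree_path[OF assms] by blast
  define f where "f = ys ! 0"
  have f: "f \<in> t" "joins src tgt f a (vs ! 1)"
    using p unfolding is_path_def f_def by (auto simp: subset_iff)
  have "reachable src tgt (t - {f}) (vs ! 1) (vs ! length ys)"
  proof (rule is_path_reachable[OF p(1)])
    fix k assume k: "1 \<le> k" "k < length ys"
    have "ys ! k \<noteq> ys ! 0"
      using is_path_distinct_edges[OF p(1)] k by (subst nth_eq_iff_index_eq) auto
    moreover have "ys ! k \<in> t" using is_path_nth_edge[OF p(1) k(2)] .
    ultimately show "ys ! k \<in> t - {f}" unfolding f_def by simp
  qed (use p in \<open>auto simp: is_path_def Suc_le_eq\<close>)
  then have vb: "reachable src tgt (t - {f}) (vs ! 1) b" using p(3) by simp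
  have "forest src tgt t" using t unfolding spanning_tree_def by blast
  then have "\<not> reachable src tgt (t - {f}) a (vs ! 1)"
    using forest_not_reachable_joins f(1,2) by metis
  then have "\<not> reachable src tgt (t - {f}) a b"
    using rtranclp_trans[OF _ reachable_sym[OF vb]] by blast
  then show ?thesis using that f vb unfolding fe f_def by blast
qed

lemma spanning_tree_exchange:
  assumes t: "spanning_tree E src tgt W t" and "x \<in> E" and x: "joins src tgt x a b"
    and "a \<noteq> b" and "a \<in> W" "b \<in> W" and "x \<notin> t"
  shows "spanning_tree E src tgt W (insert x t - {first_edge src tgt t a b})"
proof -
  define f where "f = first_edge src tgt t a b"
  obtain v where f: "joins src tgt f a v" and vb: "reachable src tgt (t - {f}) v b"
    and ab: "\<not> reachable src tgt (t - {f}) a b"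
    using spanning_tree_first_edge_bridge[OF t \<open>a \<in> W\<close> \<open>b \<in> W\<close> \<open>a \<noteq> b\<close>] unfolding f_def .
  have forest: "forest src tgt t" and t_sub: "t \<subseteq> induced_edges E src tgt W"
    and t_conn: "\<forall>u\<in>W. \<forall>w\<in>W. reachable src tgt t u w"
    using t unfolding spanning_tree_iff_reachable by auto
  have "f \<in> t" using first_edge_in_tree(1)[OF t \<open>a \<in> W\<close> \<open>b \<in> W\<close> \<open>a \<noteq> b\<close>] unfolding f_def .
  then have t': "insert x t - {f} = insert x (t - {f})" using \<open>x \<notin> t\<close> by auto
  have "\<not> reachable src tgt (t - {f}) (src x) (tgt x)"
    using x ab reachable_sym[of src tgt "t - {f}" b a] unfolding joins_def by auto
  moreover have "src x \<noteq> tgt x" using x \<open>a \<noteq> b\<close> unfolding joins_def by auto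
  ultimately have "forest src tgt (insert x (t - {f}))"
    by (intro forest_insert forest_subset[OF forest]) auto
  moreover have "\<forall>u\<in>W. \<forall>w\<in>W. reachable src tgt (insert x (t - {f})) u w"
  proof (intro ballI)
    fix u w assume "u \<in> W" "w \<in> W"
    have "reachable src tgt (insert x (t - {f})) a v"
      using reachable_joins[OF insertI1 x] reachable_mono[OF reachable_sym[OF vb] subset_insertI]
      by (rule rtranclp_trans)
    then have "reachable src tgt (insert x (t - {f})) (src f) (tgt f)"
      using f reachable_sym[of src tgt "insert x (t - {f})" a v] unfolding joins_def by auto
    moreover have "reachable src tgt t u w" using t_conn \<open>u \<in> W\<close> \<open>w \<in> W\<close> by blast
    then have "reachable src tgt (insert f (insert x (t - {f}))) u w"
      by (rule reachable_mono) auto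
    ultimately show "reachable src tgt (insert x (t - {f})) u w"
      by (rule reachable_insert_redundant)
  qed
  moreover have "x \<in> induced_edges E src tgt W"
    using \<open>x \<in> E\<close> x \<open>a \<in> W\<close> \<open>b \<in> W\<close> unfolding induced_edges_def joins_def by auto
  then have "insert x (t - {f}) \<subseteq> induced_edges E src tgt W" using t_sub by blast
  ultimately show ?thesis unfolding spanning_tree_iff_reachable f_def[symmetric] t' by simp
qed

section \<open>Weights of spanning trees\<close>

definition incident_edges :: "'e set \<Rightarrow> ('e \<Rightarrow> 'v) \<Rightarrow> ('e \<Rightarrow> 'v) \<Rightarrow> 'v \<Rightarrow> 'e set" where
  "incident_edges E src tgt u = {x\<in>E. src x = u \<or> tgt x = u}"

lemma vcond_eq_sum_incident: "vcond E src tgt c u = sum c (incident_edges E src tgt u)"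
  unfolding vcond_def incident_edges_def ..

lemma network_conductance_pos: "network V E src tgt c \<Longrightarrow> x \<in> E \<Longrightarrow> 0 < c x"
  unfolding network_def by auto

lemma finite_incident_edges:
  "network V E src tgt c \<Longrightarrow> u \<in> V \<Longrightarrow> finite (incident_edges E src tgt u)"
  unfolding network_def incident_edges_def by auto

lemma conductance_le_vcond:
  assumes net: "network V E src tgt c" and "x \<in> E" and "src x = a \<or> tgt x = a"
  shows "c x \<le> vcond E src tgt c a"
proof -
  have "a \<in> V" using assms unfolding network_def by auto
  then show ?thesis
    unfolding vcond_eq_sum_incident using assms finite_incident_edges[OF net]
    by (intro member_le_sum) (auto simp: incident_edges_def less_imp_le network_conductance_pos)
qed

lemma induced_edges_subset_incident:
  "induced_edges E src tgt W \<subseteq> (\<Union>u\<in>W. incident_edges E src tgt u)"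
proof
  fix x assume "x \<in> induced_edges E src tgt W"
  then have "x \<in> incident_edges E src tgt (src x)" and "src x \<in> W"
    unfolding induced_edges_def incident_edges_def by auto
  then show "x \<in> (\<Union>u\<in>W. incident_edges E src tgt u)" by blast
qed

lemma finite_induced_edges:
  assumes "network V E src tgt c" and "finite W" and "W \<subseteq> V"
  shows "finite (induced_edges E src tgt W)"
proof -
  have "finite (\<Union>u\<in>W. incident_edges E src tgt u)"
    using assms by (intro finite_UN_I) (auto intro: finite_incident_edges)
  then show ?thesis using induced_edges_subset_incident by (rule finite_subset[rotated])
qed

lemma spanning_tree_subset_edges: "spanning_tree E src tgt W T \<Longrightarrow> T \<subseteq> E"
  unfolding spanning_tree_def induced_edges_def by auto

lemma finite_spanning_trees:
  assumes "network V E src tgt c" and "finite W" and "W \<subseteq> V"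
  shows "finite {T. spanning_tree E src tgt W T \<and> P T}"
  using finite_induced_edges[OF assms]
  by (rule rev_finite_subset[OF finite_Pow_iff[THEN iffD2]]) (auto simp: spanning_tree_def)

lemma finite_spanning_tree:
  assumes "network V E src tgt c" and "finite W" and "W \<subseteq> V" and "spanning_tree E src tgt W T"
  shows "finite T"
  using finite_induced_edges[OF assms(1-3)] assms(4) unfolding spanning_tree_def
  by (meson finite_subset)

lemma prod_conductance_nonneg:
  "network V E src tgt c \<Longrightarrow> spanning_tree E src tgt W T \<Longrightarrow> 0 \<le> (\<Prod>y\<in>T. c y)"
  using spanning_tree_subset_edges network_conductance_pos
  by (metis less_imp_le prod_nonneg subsetD)

definition tree_weight ::
  "'e set \<Rightarrow> ('e \<Rightarrow> 'v) \<Rightarrow> ('e \<Rightarrow> 'v) \<Rightarrow> ('e \<Rightarrow> real) \<Rightarrow> 'v set \<Rightarrow> ('e set \<Rightarrow> bool) \<Rightarrow> real" where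
  "tree_weight E src tgt c W P = (\<Sum>T\<in>{T. spanning_tree E src tgt W T \<and> P T}. \<Prod>y\<in>T. c y)"

lemma ust_prob_eq_tree_weight:
  "ust_prob E src tgt c W P = tree_weight E src tgt c W P / tree_weight E src tgt c W (\<lambda>_. True)"
  unfolding ust_prob_def tree_weight_def by simp

lemma tree_weight_nonneg:
  "network V E src tgt c \<Longrightarrow> 0 \<le> tree_weight E src tgt c W P"
  unfolding tree_weight_def by (auto intro: sum_nonneg prod_conductance_nonneg)

lemma sum_le_sum_times_sum_inj_on:
  fixes f :: "'a \<Rightarrow> real"
  assumes "inj_on h S" and "h ` S \<subseteq> A \<times> B" and "finite A" and "finite B"
    and "\<And>s. s \<in> S \<Longrightarrow> f s = g (fst (h s)) * k (snd (h s))"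
    and "\<And>a. a \<in> A \<Longrightarrow> 0 \<le> g a" and "\<And>b. b \<in> B \<Longrightarrow> 0 \<le> k b"
  shows "sum f S \<le> sum g A * sum k B"
proof -
  have "sum f S = (\<Sum>p\<in>h ` S. g (fst p) * k (snd p))"
    using assms(1,5) by (simp add: sum.reindex)
  also have "\<dots> \<le> (\<Sum>p\<in>A \<times> B. g (fst p) * k (snd p))"
    using assms(2-4,6,7) by (intro sum_mono2) auto
  also have "\<dots> = sum g A * sum k B"
    by (simp add: sum_product sum.cartesian_product case_prod_beta)
  finally show ?thesis .
qed

lemma spanning_tree_exchange_weight:
  assumes "network V E src tgt c" and "finite W" and "W \<subseteq> V"
    and "spanning_tree E src tgt W T" and "y \<in> T" and "x \<notin> T"
  shows "(\<Prod>z\<in>T. c z) * c x = (\<Prod>z\<in>insert x T - {y}. c z) * c y"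
proof -
  have "finite T" using finite_spanning_tree[OF assms(1-4)] .
  moreover have "insert x T - {y} = insert x (T - {y})" using assms(5,6) by auto
  ultimately show ?thesis using assms(5,6) by (simp add: prod.remove[of T y])
qed

lemma inj_on_exchange:
  "inj_on (\<lambda>T. (insert x T - {d T}, d T)) {T. x \<notin> T \<and> d T \<in> T \<and> d T \<noteq> x}"
proof (rule inj_onI)
  have recover: "T = insert (d T) (insert x T - {d T}) - {x}"
    if "T \<in> {T. x \<notin> T \<and> d T \<in> T \<and> d T \<noteq> x}" for T
    using that by auto
  fix T T' assume T: "T \<in> {T. x \<notin> T \<and> d T \<in> T \<and> d T \<noteq> x}" "T' \<in> {T. x \<notin> T \<and> d T \<in> T \<and> d T \<noteq> x}"
    and "(insert x T - {d T}, d T) = (insert x T' - {d T'}, d T')"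
  then have eq1: "insert x T - {d T} = insert x T' - {d T'}" and eq2: "d T = d T'"
    unfolding prod.inject by blast+
  have "T = insert (d T) (insert x T - {d T}) - {x}" using recover[OF T(1)] .
  also have "\<dots> = insert (d T') (insert x T' - {d T'}) - {x}"
    unfolding eq1 by (simp only: eq2)
  also have "\<dots> = T'" using recover[OF T(2)] by (rule sym)
  finally show "T = T'" .
qed

lemma first_edge_exchange:
  assumes T: "spanning_tree E src tgt W T" and "x \<in> E" and x: "joins src tgt x a b"
    and "a \<noteq> b" and "a \<in> W" "b \<in> W" and "x \<notin> T"
  shows "first_edge src tgt T a b \<in> T"
    and "first_edge src tgt T a b \<in> incident_edges E src tgt a - {x}"
    and "spanning_tree E src tgt W (insert x T - {first_edge src tgt T a b})"
proof -
  show "first_edge src tgt T a b \<in> T" using first_edge_in_tree(1)[OF T \<open>a \<in> W\<close> \<open>b \<in> W\<close> \<open>a \<noteq> b\<close>] .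
  then show "first_edge src tgt T a b \<in> incident_edges E src tgt a - {x}"
    using first_edge_in_tree(2)[OF T \<open>a \<in> W\<close> \<open>b \<in> W\<close> \<open>a \<noteq> b\<close>] \<open>x \<notin> T\<close>
      spanning_tree_subset_edges[OF T] unfolding incident_edges_def by auto
  show "spanning_tree E src tgt W (insert x T - {first_edge src tgt T a b})"
    using spanning_tree_exchange[OF assms] .
qed

lemma tree_weight_exchange_le:
  assumes net: "network V E src tgt c" and W: "finite W" "W \<subseteq> V"
    and "x \<in> E" and x: "joins src tgt x a b" and "a \<noteq> b" and "a \<in> W" "b \<in> W"
  shows "tree_weight E src tgt c W (\<lambda>T. x \<notin> T \<and> P (insert x T - {first_edge src tgt T a b}))
    \<le> tree_weight E src tgt c W (\<lambda>T. x \<in> T \<and> P T) / c x * (vcond E src tgt c a - c x)"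
proof -
  define w where "w T = (\<Prod>y\<in>T. c y)" for T
  define D where "D T = first_edge src tgt T a b" for T
  define S1 where "S1 = {T. spanning_tree E src tgt W T \<and> x \<in> T \<and> P T}"
  define S2 where "S2 = {T. spanning_tree E src tgt W T \<and> x \<notin> T \<and> P (insert x T - {D T})}"
  define Ea where "Ea = incident_edges E src tgt a"
  note D = first_edge_exchange[OF _ \<open>x \<in> E\<close> x \<open>a \<noteq> b\<close> \<open>a \<in> W\<close> \<open>b \<in> W\<close>, folded D_def Ea_def]
  have cx: "0 < c x" using network_conductance_pos[OF net \<open>x \<in> E\<close>] .
  \<comment> \<open>Each tree of S2 is recovered from the tree of S1 and the edge it is exchanged with.\<close>
  have "sum w S2 \<le> sum (\<lambda>T. w T / c x) S1 * sum c (Ea - {x})"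
  proof (rule sum_le_sum_times_sum_inj_on[where h = "\<lambda>T. (insert x T - {D T}, D T)"])
    show "inj_on (\<lambda>T. (insert x T - {D T}, D T)) S2"
      by (rule inj_on_subset[OF inj_on_exchange]) (use D(1,2) in \<open>auto simp: S2_def\<close>)
    show "(\<lambda>T. (insert x T - {D T}, D T)) ` S2 \<subseteq> S1 \<times> (Ea - {x})"
      using D unfolding S1_def S2_def by (auto simp del: insert_Diff_single)
    show "finite S1" using finite_spanning_trees[OF net W] unfolding S1_def .
    show "finite (Ea - {x})"
      using finite_incident_edges[OF net] \<open>a \<in> W\<close> W unfolding Ea_def by auto
    show "w T = w (fst (insert x T - {D T}, D T)) / c x * c (snd (insert x T - {D T}, D T))"
      if "T \<in> S2" for T
      using spanning_tree_exchange_weight[OF net W, of T "D T" x] D(1) that cx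
      unfolding S2_def w_def by (simp add: field_simps)
    show "0 \<le> w T / c x" if "T \<in> S1" for T
      using that prod_conductance_nonneg[OF net] cx unfolding S1_def w_def by auto
    show "0 \<le> c y" if "y \<in> Ea - {x}" for y
      using that network_conductance_pos[OF net] unfolding Ea_def incident_edges_def
      by (auto intro: less_imp_le)
  qed
  also have "sum c (Ea - {x}) = vcond E src tgt c a - c x"
    using finite_incident_edges[OF net] \<open>a \<in> W\<close> W \<open>x \<in> E\<close> x
    unfolding vcond_eq_sum_incident Ea_def incident_edges_def joins_def
    by (subst sum_diff1) auto
  finally show ?thesis
    unfolding tree_weight_def w_def S1_def S2_def D_def by (simp add: sum_divide_distrib)
qed

lemma tree_weight_update_le:
  assumes net: "network V E src tgt c" and W: "finite W" "W \<subseteq> V"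
    and "x \<in> E" and x: "joins src tgt x a b" and "a \<noteq> b" and "a \<in> W" "b \<in> W"
  shows "tree_weight E src tgt c W (\<lambda>T. P (upd src tgt x T (first_edge src tgt T a b)))
    \<le> vcond E src tgt c a / c x * tree_weight E src tgt c W P"
proof -
  let ?w = "tree_weight E src tgt c W"
  have cx: "0 < c x" using network_conductance_pos[OF net \<open>x \<in> E\<close>] .
  have "src x \<noteq> tgt x" using x \<open>a \<noteq> b\<close> unfolding joins_def by auto
  then have "{T. spanning_tree E src tgt W T \<and> P (upd src tgt x T (first_edge src tgt T a b))}
      = {T. spanning_tree E src tgt W T \<and> x \<in> T \<and> P T}
        \<union> {T. spanning_tree E src tgt W T \<and> x \<notin> T \<and> P (insert x T - {first_edge src tgt T a b})}"
    unfolding upd_def by auto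
  then have "?w (\<lambda>T. P (upd src tgt x T (first_edge src tgt T a b)))
      = ?w (\<lambda>T. x \<in> T \<and> P T) + ?w (\<lambda>T. x \<notin> T \<and> P (insert x T - {first_edge src tgt T a b}))"
    unfolding tree_weight_def using finite_spanning_trees[OF net W]
    by (simp add: sum.union_disjoint[symmetric] disjoint_iff)
  also have "\<dots> \<le> ?w (\<lambda>T. x \<in> T \<and> P T) + ?w (\<lambda>T. x \<in> T \<and> P T) / c x * (vcond E src tgt c a - c x)"
    using tree_weight_exchange_le[OF assms] by simp
  also have "\<dots> = vcond E src tgt c a / c x * ?w (\<lambda>T. x \<in> T \<and> P T)"
    using cx by (simp add: field_simps)
  also have "?w (\<lambda>T. x \<in> T \<and> P T) \<le> ?w P"
    unfolding tree_weight_def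
    using finite_spanning_trees[OF net W] prod_conductance_nonneg[OF net]
    by (intro sum_mono2) auto
  then have "vcond E src tgt c a / c x * ?w (\<lambda>T. x \<in> T \<and> P T) \<le> vcond E src tgt c a / c x * ?w P"
    using conductance_le_vcond[OF net \<open>x \<in> E\<close>, of a] x cx
    by (intro mult_left_mono) (auto simp: joins_def)
  finally show ?thesis .
qed

lemma ust_prob_update_le:
  assumes "network V E src tgt c" and "finite W" "W \<subseteq> V"
    and "x \<in> E" and "joins src tgt x a b" and "a \<noteq> b" and "a \<in> W" "b \<in> W"
  shows "ust_prob E src tgt c W (\<lambda>T. P (upd src tgt x T (first_edge src tgt T a b)))
    \<le> vcond E src tgt c a / c x * ust_prob E src tgt c W P"
  using divide_right_mono[OF tree_weight_update_le[OF assms, of P] tree_weight_nonneg[OF assms(1)]]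
  unfolding ust_prob_eq_tree_weight by (simp only: times_divide_eq_right)

lemma ust_prob_sum_le:
  assumes net: "network V E src tgt c" and W: "finite W" "W \<subseteq> V" and "finite I"
    and disjoint: "\<And>i j T. i \<in> I \<Longrightarrow> j \<in> I \<Longrightarrow> Q i T \<Longrightarrow> Q j T \<Longrightarrow> i = j"
    and sub: "\<And>i T. i \<in> I \<Longrightarrow> Q i T \<Longrightarrow> P T"
  shows "(\<Sum>i\<in>I. ust_prob E src tgt c W (Q i)) \<le> ust_prob E src tgt c W P"
proof -
  let ?S = "\<lambda>i. {T. spanning_tree E src tgt W T \<and> Q i T}"
  have "(\<Sum>i\<in>I. tree_weight E src tgt c W (Q i)) = (\<Sum>T\<in>(\<Union>i\<in>I. ?S i). \<Prod>y\<in>T. c y)"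
    unfolding tree_weight_def using \<open>finite I\<close> finite_spanning_trees[OF net W] disjoint
    by (subst sum.UNION_disjoint) auto
  also have "\<dots> \<le> tree_weight E src tgt c W P"
    unfolding tree_weight_def using finite_spanning_trees[OF net W] sub prod_conductance_nonneg[OF net]
    by (intro sum_mono2) auto
  finally show ?thesis
    unfolding ust_prob_eq_tree_weight sum_divide_distrib[symmetric]
    using tree_weight_nonneg[OF net] by (simp add: divide_right_mono)
qed

lemma ust_prob_eq_0:
  assumes "\<And>T. spanning_tree E src tgt W T \<Longrightarrow> \<not> P T"
  shows "ust_prob E src tgt c W P = 0"
proof -
  have none: "{T. spanning_tree E src tgt W T \<and> P T} = {}" using assms by blast
  show ?thesis unfolding ust_prob_def none by simp
qed

section \<open>The configuration space\<close>

lemma coordinate_events_subset: "(\<lambda>z. {f\<in>Pow E. z \<in> f}) ` E \<subseteq> Pow (Pow E)"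
  by auto

lemma space_conf_space [simp]: "space (conf_space E) = Pow E"
  unfolding conf_space_def by (rule space_measure_of[OF coordinate_events_subset])

lemma sets_conf_space: "sets (conf_space E) = sigma_sets (Pow E) ((\<lambda>z. {f\<in>Pow E. z \<in> f}) ` E)"
  unfolding conf_space_def by (rule sets_measure_of[OF coordinate_events_subset])

lemma coordinate_event_in_conf_space: "z \<in> E \<Longrightarrow> {f\<in>Pow E. z \<in> f} \<in> sets (conf_space E)"
  unfolding sets_conf_space by (rule sigma_sets.Basic) auto

lemma cyl_in_conf_space:
  assumes "finite K" and "K \<subseteq> E"
  shows "cyl E K B \<in> sets (conf_space E)"
proof (cases "B \<subseteq> K")
  case True
  have "cyl E K B = Pow E - (\<Union>z\<in>B. Pow E - {f\<in>Pow E. z \<in> f}) - (\<Union>z\<in>K - B. {f\<in>Pow E. z \<in> f})"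
    unfolding cyl_def using True by auto
  also have "\<dots> \<in> sets (conf_space E)"
    using True assms finite_subset[OF True assms(1)] sets.top[of "conf_space E"]
    by (intro sets.Diff sets.finite_UN coordinate_event_in_conf_space) auto
  finally show ?thesis .
next
  case False
  then have "cyl E K B = {}" unfolding cyl_def by auto
  then show ?thesis by simp
qed

definition cylinder_events :: "'e set \<Rightarrow> 'e set set set" where
  "cylinder_events E = {{f\<in>Pow E. f \<inter> K \<in> BB} | K BB. finite K \<and> K \<subseteq> E}"

lemma cylinder_event_eq_Union_cyl: "{f\<in>Pow E. f \<inter> K \<in> BB} = (\<Union>B\<in>BB \<inter> Pow K. cyl E K B)"
  unfolding cyl_def by auto

lemma algebra_cylinder_events: "algebra (Pow E) (cylinder_events E)"
  unfolding algebra_iff_Int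
proof (intro conjI ballI)
  show "cylinder_events E \<subseteq> Pow (Pow E)" unfolding cylinder_events_def by auto
  have "{} = {f\<in>Pow E. f \<inter> {} \<in> {}}" by simp
  then show "{} \<in> cylinder_events E" unfolding cylinder_events_def by blast
  fix X assume "X \<in> cylinder_events E"
  then obtain K BB where X: "X = {f\<in>Pow E. f \<inter> K \<in> BB}" "finite K" "K \<subseteq> E"
    unfolding cylinder_events_def by blast
  have "Pow E - X = {f\<in>Pow E. f \<inter> K \<in> - BB}" unfolding X by auto
  then show "Pow E - X \<in> cylinder_events E" unfolding cylinder_events_def using X by blast
  fix Y assume "Y \<in> cylinder_events E"
  then obtain L CC where Y: "Y = {f\<in>Pow E. f \<inter> L \<in> CC}" "finite L" "L \<subseteq> E"
    unfolding cylinder_events_def by blast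
  \<comment> \<open>Both events are read off the common window K \<union> L.\<close>
  have "X \<inter> Y = {f\<in>Pow E. f \<inter> (K \<union> L) \<in> {B. B \<inter> K \<in> BB \<and> B \<inter> L \<in> CC}}"
  proof -
    have "f \<inter> (K \<union> L) \<inter> K = f \<inter> K" "f \<inter> (K \<union> L) \<inter> L = f \<inter> L" for f :: "'a set"
      by auto
    then show ?thesis unfolding X Y by (auto simp only: mem_Collect_eq)
  qed
  then show "X \<inter> Y \<in> cylinder_events E"
    unfolding cylinder_events_def using X Y by blast
qed

lemma sets_conf_space_cylinder_events:
  "sets (conf_space E) = sigma_sets (Pow E) (cylinder_events E)"
proof
  have "(\<lambda>z. {f\<in>Pow E. z \<in> f}) ` E \<subseteq> cylinder_events E"
  proof (rule image_subsetI)
    fix z assume "z \<in> E"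
    have "{f\<in>Pow E. z \<in> f} = {f\<in>Pow E. f \<inter> {z} \<in> {{z}}}" by auto
    then show "{f\<in>Pow E. z \<in> f} \<in> cylinder_events E"
      unfolding cylinder_events_def using \<open>z \<in> E\<close> by blast
  qed
  then show "sets (conf_space E) \<subseteq> sigma_sets (Pow E) (cylinder_events E)"
    unfolding sets_conf_space by (rule sigma_sets_mono')
  have "cylinder_events E \<subseteq> sets (conf_space E)"
  proof
    fix X assume "X \<in> cylinder_events E"
    then obtain K BB where X: "X = {f\<in>Pow E. f \<inter> K \<in> BB}" "finite K" "K \<subseteq> E"
      unfolding cylinder_events_def by blast
    have "(\<Union>B\<in>BB \<inter> Pow K. cyl E K B) \<in> sets (conf_space E)"
      using X(2,3) by (intro sets.finite_UN cyl_in_conf_space) auto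
    then show "X \<in> sets (conf_space E)"
      unfolding X(1) cylinder_event_eq_Union_cyl .
  qed
  then show "sigma_sets (Pow E) (cylinder_events E) \<subseteq> sets (conf_space E)"
    by (metis sets.sigma_sets_subset space_conf_space)
qed

lemma conf_space_measure_le_cyl:
  assumes "finite_measure M" and "finite_measure N"
    and "sets M = sets (conf_space E)" and "sets N = sets (conf_space E)"
    and cyl_le: "\<And>K B. finite K \<Longrightarrow> K \<subseteq> E \<Longrightarrow> B \<subseteq> K \<Longrightarrow>
      k * measure N (cyl E K B) \<le> measure M (cyl E K B)"
    and "A \<in> sets (conf_space E)"
  shows "k * measure N A \<le> measure M A"
proof (rule finite_measure_le_sigma_sets_generator[OF algebra_cylinder_events assms(1,2)])
  show "sets M = sigma_sets (Pow E) (cylinder_events E)" "sets N = sigma_sets (Pow E) (cylinder_events E)"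
    "A \<in> sigma_sets (Pow E) (cylinder_events E)"
    using assms(3,4,6) sets_conf_space_cylinder_events by auto
  fix X assume "X \<in> cylinder_events E"
  then obtain K BB where X: "X = (\<Union>B\<in>BB \<inter> Pow K. cyl E K B)" "finite K" "K \<subseteq> E"
    unfolding cylinder_events_def cylinder_event_eq_Union_cyl by blast
  have "measure L X = (\<Sum>B\<in>BB \<inter> Pow K. measure L (cyl E K B))"
    if "finite_measure L" "sets L = sets (conf_space E)" for L
  proof -
    have "disjoint_family_on (cyl E K) (BB \<inter> Pow K)"
      unfolding disjoint_family_on_def cyl_def by auto
    then show ?thesis
      unfolding X(1) using X(2,3) that
      by (intro measure_finite_Union) (auto simp: finite_measure.emeasure_finite cyl_in_conf_space)
  qed
  then have "measure M X = (\<Sum>B\<in>BB \<inter> Pow K. measure M (cyl E K B))"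
    and "k * measure N X = (\<Sum>B\<in>BB \<inter> Pow K. k * measure N (cyl E K B))"
    using assms(1-4) by (simp_all add: sum_distrib_left)
  then show "k * measure N X \<le> measure M X"
    using cyl_le X(2,3) by (auto intro: sum_mono)
qed

lemma space_joint_space:
  assumes "sets \<nu> = sets (conf_space E \<Otimes>\<^sub>M count_space E)"
  shows "space \<nu> = Pow E \<times> E"
  using sets_eq_imp_space_eq[OF assms] by (simp add: space_pair_measure)

lemma upd_measurable:
  assumes "x \<in> E" and loop: "src x \<noteq> tgt x"
    and sets_\<nu>: "sets \<nu> = sets (conf_space E \<Otimes>\<^sub>M count_space E)"
  shows "(\<lambda>p. upd src tgt x (fst p) (snd p)) \<in> measurable \<nu> (conf_space E)"
  unfolding conf_space_def
proof (rule measurable_measure_of[OF coordinate_events_subset])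
  define C where "C z = {f\<in>Pow E. z \<in> f}" for z
  have space: "space \<nu> = Pow E \<times> E" using space_joint_space[OF sets_\<nu>] .
  show "(\<lambda>p. upd src tgt x (fst p) (snd p)) \<in> space \<nu> \<rightarrow> Pow E"
    unfolding space upd_def using \<open>x \<in> E\<close> by (auto split: if_splits)
  fix Z assume "Z \<in> (\<lambda>z. {f\<in>Pow E. z \<in> f}) ` E"
  then obtain z where z: "z \<in> E" "Z = C z" unfolding C_def by blast
  have C: "C x \<in> sets (conf_space E)" "C z \<in> sets (conf_space E)" "Pow E \<in> sets (conf_space E)"
    using coordinate_event_in_conf_space[OF \<open>x \<in> E\<close>] coordinate_event_in_conf_space[OF z(1)]
      sets.top[of "conf_space E"] unfolding C_def by auto
  have "(\<lambda>p. upd src tgt x (fst p) (snd p)) -` Z \<inter> space \<nu>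
      = (C x \<inter> C z) \<times> E \<union> ((Pow E - C x) \<inter> (if z = x then Pow E else C z)) \<times> (E - {z})"
    unfolding space z C_def upd_def using loop \<open>x \<in> E\<close> by (auto split: if_splits)
  also have "\<dots> \<in> sets (conf_space E \<Otimes>\<^sub>M count_space E)"
    using C \<open>x \<in> E\<close> z(1) by (auto intro!: sets.Un sets.Int sets.Diff pair_measureI)
  finally show "(\<lambda>p. upd src tgt x (fst p) (snd p)) -` Z \<inter> space \<nu> \<in> sets \<nu>"
    unfolding sets_\<nu> .
qed

section \<open>Passing to the limit\<close>

lemma countable_edges:
  assumes net: "network V E src tgt c" and exh: "exhaustion V E src tgt Vn"
  shows "countable E"
proof -
  have "countable V"
    using exh unfolding exhaustion_def by (metis countable_UN countable_finite UNIV_I countableI_type)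
  then have "countable (\<Union>u\<in>V. incident_edges E src tgt u)"
    using finite_incident_edges[OF net] by (auto intro: countable_finite)
  moreover have "E \<subseteq> (\<Union>u\<in>V. incident_edges E src tgt u)"
    using net unfolding network_def incident_edges_def by auto
  ultimately show ?thesis by (rule countable_subset[rotated])
qed

lemma exhaustion_eventually_mem:
  assumes "exhaustion V E src tgt Vn" and "v \<in> V"
  shows "eventually (\<lambda>n. v \<in> Vn n) sequentially"
proof -
  obtain m where "v \<in> Vn m" using assms unfolding exhaustion_def by blast
  moreover have "Vn m \<subseteq> Vn n" if "m \<le> n" for n
    using assms(1) that unfolding exhaustion_def by (metis lift_Suc_mono_le)
  ultimately show ?thesis unfolding eventually_sequentially by blast
qed

lemma upd_Int_window:
  assumes "src x \<noteq> tgt x" and "x \<in> K'" and "K \<subseteq> K'"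
  shows "upd src tgt x f y \<inter> K = upd src tgt x (f \<inter> K') y \<inter> K"
  using assms unfolding upd_def by auto

definition update_cells ::
  "('e \<Rightarrow> 'v) \<Rightarrow> ('e \<Rightarrow> 'v) \<Rightarrow> 'e \<Rightarrow> 'e set \<Rightarrow> 'e set \<Rightarrow> 'e set \<Rightarrow> 'e set \<Rightarrow> ('e \<times> 'e set) set" where
  "update_cells src tgt x K' K B Y = (SIGMA y:Y. {B'. B' \<subseteq> K' \<and> upd src tgt x B' y \<inter> K = B})"

lemma finite_update_cells: "finite K' \<Longrightarrow> finite Y \<Longrightarrow> finite (update_cells src tgt x K' K B Y)"
  unfolding update_cells_def by (auto intro: finite_subset[of _ "Pow K'"])

lemma upd_preimage_cyl_subset_cells:
  assumes "src x \<noteq> tgt x" and "x \<in> K'" and "K \<subseteq> K'"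
  shows "{p\<in>Pow E \<times> E. upd src tgt x (fst p) (snd p) \<in> cyl E K B}
    \<subseteq> (\<Union>p\<in>update_cells src tgt x K' K B Y. cyl E K' (snd p) \<times> {fst p}) \<union> Pow E \<times> (E - Y)"
proof (rule subsetI)
  fix p assume p: "p \<in> {p\<in>Pow E \<times> E. upd src tgt x (fst p) (snd p) \<in> cyl E K B}"
  obtain f y where [simp]: "p = (f, y)" by (cases p)
  have f: "f \<subseteq> E" "y \<in> E" "upd src tgt x f y \<inter> K = B" using p unfolding cyl_def by auto
  show "p \<in> (\<Union>p\<in>update_cells src tgt x K' K B Y. cyl E K' (snd p) \<times> {fst p}) \<union> Pow E \<times> (E - Y)"
  proof (cases "y \<in> Y")
    case True
    have "upd src tgt x (f \<inter> K') y \<inter> K = B"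
      using f upd_Int_window[where src = src and tgt = tgt and f = f, OF assms] by simp
    then have "(y, f \<inter> K') \<in> update_cells src tgt x K' K B Y"
      unfolding update_cells_def using True by auto
    moreover have "p \<in> cyl E K' (f \<inter> K') \<times> {y}" unfolding cyl_def using f by auto
    ultimately show ?thesis by force
  qed (use f in auto)
qed

context
  fixes V :: "'v set" and E :: "'e set" and src tgt :: "'e \<Rightarrow> 'v" and c :: "'e \<Rightarrow> real"
    and Vn :: "nat \<Rightarrow> 'v set" and x :: 'e and a b :: 'v
  assumes net: "network V E src tgt c" and exh: "exhaustion V E src tgt Vn"
    and "x \<in> E" and x: "joins src tgt x a b" and "a \<noteq> b"
begin

lemma eventually_endpoints_mem: "eventually (\<lambda>n. a \<in> Vn n \<and> b \<in> Vn n) sequentially"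
proof -
  have "a \<in> V" "b \<in> V" using net \<open>x \<in> E\<close> x unfolding network_def joins_def by auto
  then show ?thesis using exhaustion_eventually_mem[OF exh] by (auto intro: eventually_conj)
qed

lemma joint_null_nonincident:
  assumes joint: "is_joint_FUSF_D V E src tgt c Vn a b \<nu>"
    and y: "y \<in> E - incident_edges E src tgt a"
  shows "measure \<nu> (Pow E \<times> {y}) = 0"
proof -
  have "(\<lambda>n. ust_prob E src tgt c (Vn n) (\<lambda>t. t \<inter> {} = {} \<and> first_edge src tgt t a b = y))
      \<longlonglongrightarrow> measure \<nu> (cyl E {} {} \<times> {y})"
    using joint y unfolding is_joint_FUSF_D_def by auto
  moreover have "cyl E {} {} = Pow E" unfolding cyl_def by auto
  \<comment> \<open>As soon as Vn n contains a and b, the first edge of every spanning tree is incident to a.\<close>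
  moreover have "eventually (\<lambda>n. ust_prob E src tgt c (Vn n)
      (\<lambda>t. t \<inter> {} = {} \<and> first_edge src tgt t a b = y) = 0) sequentially"
    using eventually_endpoints_mem
  proof (rule eventually_mono)
    fix n assume "a \<in> Vn n \<and> b \<in> Vn n"
    then show "ust_prob E src tgt c (Vn n) (\<lambda>t. t \<inter> {} = {} \<and> first_edge src tgt t a b = y) = 0"
      using first_edge_in_tree[of E src tgt "Vn n" _ a b] \<open>a \<noteq> b\<close> y
      by (intro ust_prob_eq_0) (auto simp: incident_edges_def)
  qed
  then have "(\<lambda>n. ust_prob E src tgt c (Vn n) (\<lambda>t. t \<inter> {} = {} \<and> first_edge src tgt t a b = y))
      \<longlonglongrightarrow> 0"
    by (rule tendsto_eventually)
  ultimately show ?thesis using LIMSEQ_unique by auto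
qed

lemma joint_null_nonincident_edges:
  assumes joint: "is_joint_FUSF_D V E src tgt c Vn a b \<nu>"
  shows "Pow E \<times> (E - incident_edges E src tgt a) \<in> null_sets \<nu>"
proof -
  have sets_\<nu>: "sets \<nu> = sets (conf_space E \<Otimes>\<^sub>M count_space E)" and "prob_space \<nu>"
    using joint unfolding is_joint_FUSF_D_def by auto
  interpret \<nu>: prob_space \<nu> by fact
  have "(\<Union>y\<in>E - incident_edges E src tgt a. Pow E \<times> {y}) \<in> null_sets \<nu>"
  proof (rule null_sets_UN')
    show "countable (E - incident_edges E src tgt a)"
      using countable_edges[OF net exh] by (rule countable_subset[rotated]) auto
    fix y assume y: "y \<in> E - incident_edges E src tgt a"
    moreover have "Pow E \<in> sets (conf_space E)" using sets.top[of "conf_space E"] by simp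
    ultimately have "Pow E \<times> {y} \<in> sets \<nu>" unfolding sets_\<nu> by (auto intro: pair_measureI)
    then show "Pow E \<times> {y} \<in> null_sets \<nu>"
      using joint_null_nonincident[OF joint y] by (simp add: null_sets_def \<nu>.emeasure_eq_measure)
  qed
  moreover have "(\<Union>y\<in>E - incident_edges E src tgt a. Pow E \<times> {y})
      = Pow E \<times> (E - incident_edges E src tgt a)" by auto
  ultimately show ?thesis by simp
qed

lemma ust_prob_update_cells_le:
  assumes W: "finite W" "W \<subseteq> V" "a \<in> W" "b \<in> W"
    and K': "finite K'" "x \<in> K'" "K \<subseteq> K'" and "finite Y"
  shows "(\<Sum>p\<in>update_cells src tgt x K' K B Y.
      ust_prob E src tgt c W (\<lambda>t. t \<inter> K' = snd p \<and> first_edge src tgt t a b = fst p))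
    \<le> vcond E src tgt c a / c x * ust_prob E src tgt c W (\<lambda>t. t \<inter> K = B)"
proof -
  have loop: "src x \<noteq> tgt x" using x \<open>a \<noteq> b\<close> unfolding joins_def by auto
  \<comment> \<open>Within a cell, the update seen through the window K is determined by the cell.\<close>
  have "(\<Sum>p\<in>update_cells src tgt x K' K B Y.
      ust_prob E src tgt c W (\<lambda>t. t \<inter> K' = snd p \<and> first_edge src tgt t a b = fst p))
      \<le> ust_prob E src tgt c W (\<lambda>t. upd src tgt x t (first_edge src tgt t a b) \<inter> K = B)"
  proof (rule ust_prob_sum_le[OF net W(1,2) finite_update_cells[OF K'(1) \<open>finite Y\<close>]])
    show "upd src tgt x t (first_edge src tgt t a b) \<inter> K = B"
      if "p \<in> update_cells src tgt x K' K B Y" "t \<inter> K' = snd p \<and> first_edge src tgt t a b = fst p"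
      for p t
      using that upd_Int_window[where src = src and tgt = tgt and f = t, OF loop K'(2,3)]
      unfolding update_cells_def by auto
  qed (auto simp: prod_eq_iff)
  also have "\<dots> \<le> vcond E src tgt c a / c x * ust_prob E src tgt c W (\<lambda>t. t \<inter> K = B)"
    using ust_prob_update_le[OF net W(1,2) \<open>x \<in> E\<close> x \<open>a \<noteq> b\<close> W(3,4), of "\<lambda>t. t \<inter> K = B"]
    by simp
  finally show ?thesis .
qed

lemma joint_update_cells_le:
  assumes fusf: "is_FUSF V E src tgt c Vn \<mu>" and joint: "is_joint_FUSF_D V E src tgt c Vn a b \<nu>"
    and K': "finite K'" "K' \<subseteq> E" "x \<in> K'" "K \<subseteq> K'" and "B \<subseteq> K"
  shows "(\<Sum>p\<in>update_cells src tgt x K' K B (incident_edges E src tgt a).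
      measure \<nu> (cyl E K' (snd p) \<times> {fst p}))
    \<le> vcond E src tgt c a / c x * measure \<mu> (cyl E K B)"
proof -
  define cells where "cells = update_cells src tgt x K' K B (incident_edges E src tgt a)"
  define cell where "cell p t \<longleftrightarrow> t \<inter> K' = snd p \<and> first_edge src tgt t a b = fst p" for p t
  have "a \<in> V" using net \<open>x \<in> E\<close> x unfolding network_def joins_def by auto
  then have "finite (incident_edges E src tgt a)" by (rule finite_incident_edges[OF net])
  have "(\<lambda>n. \<Sum>p\<in>cells. ust_prob E src tgt c (Vn n) (cell p))
      \<longlonglongrightarrow> (\<Sum>p\<in>cells. measure \<nu> (cyl E K' (snd p) \<times> {fst p}))"
  proof (rule tendsto_sum)
    fix p assume "p \<in> cells"
    then have "fst p \<in> E" "snd p \<subseteq> K'" unfolding cells_def update_cells_def incident_edges_def by auto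
    then show "(\<lambda>n. ust_prob E src tgt c (Vn n) (cell p)) \<longlonglongrightarrow> measure \<nu> (cyl E K' (snd p) \<times> {fst p})"
      using joint K' unfolding is_joint_FUSF_D_def cell_def by blast
  qed
  moreover have "(\<lambda>n. vcond E src tgt c a / c x * ust_prob E src tgt c (Vn n) (\<lambda>t. t \<inter> K = B))
      \<longlonglongrightarrow> vcond E src tgt c a / c x * measure \<mu> (cyl E K B)"
    using fusf K' \<open>K \<subseteq> K'\<close> \<open>B \<subseteq> K\<close> unfolding is_FUSF_def
    by (intro tendsto_mult_left) (meson finite_subset order_trans)
  moreover have "eventually (\<lambda>n. (\<Sum>p\<in>cells. ust_prob E src tgt c (Vn n) (cell p))
      \<le> vcond E src tgt c a / c x * ust_prob E src tgt c (Vn n) (\<lambda>t. t \<inter> K = B)) sequentially"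
    using eventually_endpoints_mem
  proof (rule eventually_mono)
    fix n assume "a \<in> Vn n \<and> b \<in> Vn n"
    moreover have "finite (Vn n)" "Vn n \<subseteq> V" using exh unfolding exhaustion_def by auto
    ultimately show "(\<Sum>p\<in>cells. ust_prob E src tgt c (Vn n) (cell p))
        \<le> vcond E src tgt c a / c x * ust_prob E src tgt c (Vn n) (\<lambda>t. t \<inter> K = B)"
      unfolding cells_def cell_def
      using ust_prob_update_cells_le K'(1,3,4) \<open>finite (incident_edges E src tgt a)\<close> by blast
  qed
  ultimately show ?thesis
    unfolding cells_def by (rule LIMSEQ_le[OF _ _ eventually_sequentially[THEN iffD1]])
qed

lemma joint_update_cyl_le:
  assumes fusf: "is_FUSF V E src tgt c Vn \<mu>" and joint: "is_joint_FUSF_D V E src tgt c Vn a b \<nu>"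
    and K: "finite K" "K \<subseteq> E" "B \<subseteq> K"
  shows "measure \<nu> {p\<in>space \<nu>. upd src tgt x (fst p) (snd p) \<in> cyl E K B}
    \<le> vcond E src tgt c a / c x * measure \<mu> (cyl E K B)"
proof -
  have sets_\<nu>: "sets \<nu> = sets (conf_space E \<Otimes>\<^sub>M count_space E)" and "prob_space \<nu>"
    using joint unfolding is_joint_FUSF_D_def by auto
  interpret \<nu>: prob_space \<nu> by fact
  have loop: "src x \<noteq> tgt x" using x \<open>a \<noteq> b\<close> unfolding joins_def by auto
  define K' where "K' = insert x K"
  have K': "finite K'" "K' \<subseteq> E" "x \<in> K'" "K \<subseteq> K'" using K \<open>x \<in> E\<close> unfolding K'_def by auto
  define Ea where "Ea = incident_edges E src tgt a"
  define cells where "cells = update_cells src tgt x K' K B Ea"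
  define U where "U = (\<Union>p\<in>cells. cyl E K' (snd p) \<times> {fst p})"
  have "a \<in> V" using net \<open>x \<in> E\<close> x unfolding network_def joins_def by auto
  then have "finite cells"
    unfolding cells_def Ea_def using finite_incident_edges[OF net] K'(1) by (intro finite_update_cells)
  have cell_sets: "cyl E K' (snd p) \<times> {fst p} \<in> sets \<nu>" if "p \<in> cells" for p
    using that cyl_in_conf_space[OF K'(1,2)]
    unfolding sets_\<nu> cells_def update_cells_def Ea_def incident_edges_def
    by (auto intro: pair_measureI)
  have "U \<in> sets \<nu>" unfolding U_def using \<open>finite cells\<close> cell_sets by (intro sets.finite_UN) auto
  \<comment> \<open>D(e) is almost surely incident to a, so only the cells matter.\<close>
  have null: "Pow E \<times> (E - Ea) \<in> null_sets \<nu>"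
    unfolding Ea_def by (rule joint_null_nonincident_edges[OF joint])
  have "measure \<nu> {p\<in>space \<nu>. upd src tgt x (fst p) (snd p) \<in> cyl E K B}
      \<le> measure \<nu> (U \<union> Pow E \<times> (E - Ea))"
    using upd_preimage_cyl_subset_cells[where src = src and tgt = tgt and E = E and B = B and Y = Ea,
        OF loop K'(3,4)] space_joint_space[OF sets_\<nu>]
      \<open>U \<in> sets \<nu>\<close> null
    unfolding U_def cells_def by (intro \<nu>.finite_measure_mono) auto
  also have "\<dots> \<le> measure \<nu> U + measure \<nu> (Pow E \<times> (E - Ea))"
    using \<open>U \<in> sets \<nu>\<close> null by (intro measure_Un_le) auto
  also have "measure \<nu> (Pow E \<times> (E - Ea)) = 0" using null by (simp add: measure_eq_0_null_sets)
  also have "measure \<nu> U \<le> (\<Sum>p\<in>cells. measure \<nu> (cyl E K' (snd p) \<times> {fst p}))"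
    unfolding U_def using \<open>finite cells\<close> cell_sets
    by (intro \<nu>.finite_measure_subadditive_finite) auto
  also have "\<dots> \<le> vcond E src tgt c a / c x * measure \<mu> (cyl E K B)"
    unfolding cells_def Ea_def by (rule joint_update_cells_le[OF fusf joint K' K(3)])
  finally show ?thesis by simp
qed

lemma joint_update_le:
  assumes fusf: "is_FUSF V E src tgt c Vn \<mu>" and joint: "is_joint_FUSF_D V E src tgt c Vn a b \<nu>"
    and "A \<in> sets (conf_space E)"
  shows "c x / vcond E src tgt c a * measure \<nu> {p\<in>space \<nu>. upd src tgt x (fst p) (snd p) \<in> A}
    \<le> measure \<mu> A"
proof -
  let ?U = "\<lambda>p. upd src tgt x (fst p) (snd p)"
  have "prob_space \<nu>" and sets_\<nu>: "sets \<nu> = sets (conf_space E \<Otimes>\<^sub>M count_space E)"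
    using joint unfolding is_joint_FUSF_D_def by auto
  interpret \<nu>: prob_space \<nu> by fact
  have U: "?U \<in> measurable \<nu> (conf_space E)"
    using x \<open>a \<noteq> b\<close> unfolding joins_def
    by (intro upd_measurable[where src = src and tgt = tgt, OF \<open>x \<in> E\<close> _ sets_\<nu>]) auto
  have measure_U: "measure (distr \<nu> (conf_space E) ?U) A' = measure \<nu> {p\<in>space \<nu>. ?U p \<in> A'}"
    if "A' \<in> sets (conf_space E)" for A'
    using measure_distr[OF U that] by (simp add: vimage_def Int_def conj_commute)
  have "0 < c x" "c x \<le> vcond E src tgt c a"
    using network_conductance_pos[OF net \<open>x \<in> E\<close>] conductance_le_vcond[OF net \<open>x \<in> E\<close>] x
    unfolding joins_def by auto
  have "c x / vcond E src tgt c a * measure (distr \<nu> (conf_space E) ?U) A \<le> measure \<mu> A"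
  proof (rule conf_space_measure_le_cyl[OF _ _ _ _ _ assms(3)])
    fix K B assume K: "finite K" "K \<subseteq> E" "B \<subseteq> K"
    have "measure (distr \<nu> (conf_space E) ?U) (cyl E K B)
        \<le> vcond E src tgt c a / c x * measure \<mu> (cyl E K B)"
      using joint_update_cyl_le[OF fusf joint K] measure_U[OF cyl_in_conf_space[OF K(1,2)]] by simp
    then show "c x / vcond E src tgt c a * measure (distr \<nu> (conf_space E) ?U) (cyl E K B)
        \<le> measure \<mu> (cyl E K B)"
      using \<open>0 < c x\<close> \<open>c x \<le> vcond E src tgt c a\<close> by (simp add: field_simps)
  qed (use fusf U in \<open>auto simp: is_FUSF_def prob_space_def intro: \<nu>.finite_measure_distr\<close>)
  then show ?thesis using measure_U[OF assms(3)] by simp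
qed

end

theorem corollary2p4:
  fixes V :: "'v set" and E :: "'e set" and src tgt :: "'e \<Rightarrow> 'v" and c :: "'e \<Rightarrow> real"
    and Vn :: "nat \<Rightarrow> 'v set" and \<mu> :: "'e set measure" and \<nu> :: "('e set \<times> 'e) measure"
    and x :: "'e" and a b :: 'v and A :: "'e set set"
  assumes "network V E src tgt c"
    and "exhaustion V E src tgt Vn"
    and "is_FUSF V E src tgt c Vn \<mu>"
    and "x \<in> E" and "(a = src x \<and> b = tgt x) \<or> (a = tgt x \<and> b = src x)"
    and "src x \<noteq> tgt x \<Longrightarrow> is_joint_FUSF_D V E src tgt c Vn a b \<nu>"
    and "A \<in> sets (conf_space E)"
  shows "measure \<mu> A \<ge> c x / vcond E src tgt c a *
           (if src x = tgt x then measure \<mu> A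
            else measure \<nu> {p\<in>space \<nu>. upd src tgt x (fst p) (snd p) \<in> A})"
proof (cases "src x = tgt x")
  case True
  have "0 < c x" "c x \<le> vcond E src tgt c a"
    using network_conductance_pos[OF assms(1,4)] conductance_le_vcond[OF assms(1,4)] assms(5) by auto
  then have "c x / vcond E src tgt c a * measure \<mu> A \<le> measure \<mu> A"
    by (intro mult_left_le_one_le) auto
  then show ?thesis using True by simp
next
  case False
  have "joins src tgt x a b" and "a \<noteq> b" using assms(5) False unfolding joins_def by auto
  then show ?thesis
    using joint_update_le[OF assms(1,2,4) _ _ assms(3) assms(6)[OF False] assms(7)] False by simp
qed

end
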